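(* Let $\mu\in L^\infty(\mathbb{D})$ with $\|\mu\|_{L^\infty(\mathbb{D})}\le1$, put $g=\mathbf{P}\mu$, and suppose that $N_g(z)=(1-|z|^2)^2|g'(z)|^2\le\eta$ for all $z\in\mathbb{D}$, for some constant $\eta>0$. Then for every $t\in\mathbb{C}$ with $|t|\le\pi/16$ and every $r\in(0,1)$, \[ \int_\mathbb{T}\big|\mathrm{e}^{t g(r\zeta)}\big|\,\mathrm{d}s(\zeta)\le 4\,(1-r^2)^{-\eta|t|^2/4}. \]
   Context: $\mathbb{D}$ is the open unit disk, $\mathbb{T}=\partial\mathbb{D}$ the unit circle. $\mathrm{d}s$ is normalized arc length measure on $\mathbb{T}$ (total mass $1$) and $\mathrm{d}A$ is normalized area measure ($\mathrm{d}A=\pi^{-1}\mathrm{d}x\,\mathrm{d}y$). For $\mu\in L^1(\mathbb{D})$, the Bergman projection is $\mathbf{P}\mu(z)=\int_\mathbb{D}\frac{\mu(w)}{(1-z\bar w)^2}\,\mathrm{d}A(w)$, $z\in\mathbb{D}$. *)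

theory Defs
  imports "HOL-Analysis.Analysis"
begin

text \<open>Bergman projection with respect to normalized area measure dA = pi^-1 dx dy on the unit disk.\<close>
definition bergman_proj :: "(complex \<Rightarrow> complex) \<Rightarrow> complex \<Rightarrow> complex" where
  "bergman_proj \<mu> z =
     (1 / of_real pi) * (LINT w : ball 0 1 | lebesgue. \<mu> w / (1 - z * cnj w)\<^sup>2)"

text \<open>Integral over the unit circle against normalized arc length ds.\<close>
definition circle_avg :: "(complex \<Rightarrow> real) \<Rightarrow> real" where
  "circle_avg f = (1 / (2 * pi)) * (LINT \<theta> : {0..2*pi} | lborel. f (cis \<theta>))"

end

theory Submission
  imports Defs "HOL-Complex_Analysis.Complex_Analysis"
begin

text \<open>The Bergman projection g of a bounded symbol is holomorphic on the disc with
  |g(0)| \<le> 1. For h = t g put M(r) = \<integral> exp (Re h(r e^{i\<theta>})) d\<theta>. Since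
  \<Delta> e^{Re h} = |h'|^2 e^{Re h}, integrating over circles gives
  r (r M'(r))' = \<integral> |r h'(r e^{i\<theta>})|^2 e^{Re h} d\<theta> \<le> c r^2 (1 - r^2)^{-2} M(r) with c = \<eta> |t|^2.
  The weight (1 - r^2)^{-c/4} is a supersolution of the same differential inequality, so a
  Wronskian argument shows that M(r) (1 - r^2)^{c/4} decreases, whence
  M(r) \<le> 2\<pi> e^{Re h(0)} (1 - r^2)^{-c/4}; finally e^{Re h(0)} \<le> e^{|t|} \<le> 4.\<close>

section \<open>Bergman projection of a bounded symbol\<close>

lemma measure_lebesgue_unit_disc: "measure lebesgue (ball (0::complex) 1) = pi"
  using content_ball[of 1 "0::complex"] by (simp add: unit_ball_vol_2)

lemma emeasure_lebesgue_unit_disc_finite: "emeasure lebesgue (ball (0::complex) 1) < \<infinity>"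
  by (simp add: emeasure_ball)

lemma set_integrable_mult_bounded:
  fixes \<mu> F :: "complex \<Rightarrow> complex"
  assumes \<mu>: "set_borel_measurable lebesgue A \<mu>"
    and \<mu>_le: "AE w in lebesgue. w \<in> A \<longrightarrow> norm (\<mu> w) \<le> 1"
    and A: "A \<in> sets lebesgue" "emeasure lebesgue A < \<infinity>"
    and F: "F \<in> borel_measurable borel" "\<And>w. w \<in> A \<Longrightarrow> norm (F w) \<le> B"
  shows "set_integrable lebesgue A (\<lambda>w. \<mu> w * F w)"
proof (rule set_integrable_bound[where f="\<lambda>_. complex_of_real B"])
  show "set_integrable lebesgue A (\<lambda>_. complex_of_real B)"
    using A unfolding set_integrable_def
    by (intro integrable_scaleR_left integrable_real_indicator) auto
  have "F \<in> borel_measurable lebesgue"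
    using F(1) by (intro measurable_completion) simp
  with \<mu> have "(\<lambda>w. (indicator A w *\<^sub>R \<mu> w) * F w) \<in> borel_measurable lebesgue"
    unfolding set_borel_measurable_def by measurable
  then show "set_borel_measurable lebesgue A (\<lambda>w. \<mu> w * F w)"
    by (simp add: set_borel_measurable_def)
  show "AE w in lebesgue. w \<in> A \<longrightarrow> norm (\<mu> w * F w) \<le> norm (complex_of_real B)"
    using \<mu>_le
  proof eventually_elim
    case (elim w)
    show ?case
    proof
      assume w: "w \<in> A"
      have "norm (\<mu> w * F w) \<le> 1 * B"
        unfolding norm_mult using elim w F(2)[OF w] by (intro mult_mono) auto
      then show "norm (\<mu> w * F w) \<le> norm (complex_of_real B)" by simp
    qed
  qed
qed

lemma norm_set_integral_le_measure:
  fixes f :: "'a \<Rightarrow> 'b::{banach, second_countable_topology}"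
  assumes f: "set_integrable M A f" and A: "A \<in> sets M" "emeasure M A < \<infinity>"
    and f_le: "AE x in M. x \<in> A \<longrightarrow> norm (f x) \<le> c"
  shows "norm (LINT x:A|M. f x) \<le> c * measure M A"
proof -
  have "norm (LINT x:A|M. f x) \<le> (LINT x:A|M. norm (f x))"
    using f by (rule set_integral_norm_bound)
  also have "\<dots> \<le> (LINT x:A|M. c)"
    unfolding set_lebesgue_integral_def
  proof (rule integral_mono_AE)
    show "integrable M (\<lambda>x. indicator A x *\<^sub>R norm (f x))"
      using integrable_norm[OF f[unfolded set_integrable_def]] by simp
    show "integrable M (\<lambda>x. indicator A x *\<^sub>R c)"
      using A by (intro integrable_scaleR_left integrable_real_indicator) auto
    show "AE x in M. indicator A x *\<^sub>R norm (f x) \<le> indicator A x *\<^sub>R c"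
      using f_le by eventually_elim (auto simp: indicator_def)
  qed
  also have "\<dots> = c * measure M A"
    using A by (simp add: set_integral_const)
  finally show ?thesis .
qed

lemma norm_set_integral_unit_disc_mult_le:
  fixes \<mu> F :: "complex \<Rightarrow> complex"
  assumes \<mu>: "set_borel_measurable lebesgue (ball 0 1) \<mu>"
    and \<mu>_le: "AE w in lebesgue. w \<in> ball 0 1 \<longrightarrow> norm (\<mu> w) \<le> 1"
    and F: "F \<in> borel_measurable borel" "\<And>w. w \<in> ball 0 1 \<Longrightarrow> norm (F w) \<le> B"
  shows "norm (LINT w:ball 0 1|lebesgue. \<mu> w * F w) \<le> B * pi"
proof -
  have "norm (LINT w:ball 0 1|lebesgue. \<mu> w * F w) \<le> B * measure lebesgue (ball (0::complex) 1)"
  proof (rule norm_set_integral_le_measure)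
    show "set_integrable lebesgue (ball 0 1) (\<lambda>w. \<mu> w * F w)"
      using emeasure_lebesgue_unit_disc_finite by (intro set_integrable_mult_bounded[OF \<mu> \<mu>_le _ _ F]) auto
    show "AE w in lebesgue. w \<in> ball 0 1 \<longrightarrow> norm (\<mu> w * F w) \<le> B"
      using \<mu>_le
    proof eventually_elim
      case (elim w)
      then show ?case
        using F(2)[of w] by (auto simp: norm_mult intro: mult_mono[of _ 1 _ B, simplified])
    qed
  qed (use emeasure_lebesgue_unit_disc_finite in auto)
  then show ?thesis by (simp add: measure_lebesgue_unit_disc)
qed

lemma norm_one_minus_mult_cnj_ge:
  assumes "norm w \<le> 1"
  shows "1 - norm z \<le> norm (1 - z * cnj w)"
proof -
  have "norm (z * cnj w) \<le> norm z"
    using assms by (simp add: norm_mult mult_left_le)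
  then show ?thesis
    using norm_triangle_ineq2[of 1 "z * cnj w"] by simp
qed

lemma bergman_kernel_taylor_remainder:
  fixes a k c :: complex
  assumes "a \<noteq> 0" "a - k * c \<noteq> 0" "k \<noteq> 0"
  shows "(1 / (a - k * c)^2 - 1 / a^2) / k - 2 * c / a^3
           = k * c^2 * (3 * a - 2 * k * c) / (a^3 * (a - k * c)^2)"
  using assms by (simp add: field_simps) algebra

lemma bergman_kernel_remainder_bound:
  fixes z w k :: complex
  assumes z: "norm z < 1" and w: "norm w < 1" and k: "k \<noteq> 0" "norm k < (1 - norm z) / 2"
  shows "norm ((1 / (1 - (z + k) * cnj w)^2 - 1 / (1 - z * cnj w)^2) / k - 2 * cnj w / (1 - z * cnj w)^3)
           \<le> 32 * norm k / (1 - norm z)^5"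
proof -
  define a c \<delta> where "a = 1 - z * cnj w" and "c = cnj w" and "\<delta> = 1 - norm z"
  have \<delta>: "0 < \<delta>" "\<delta> \<le> 1" using z by (auto simp: \<delta>_def)
  have c: "norm c \<le> 1" using w by (simp add: c_def)
  have a_ge: "\<delta> \<le> norm a"
    using norm_one_minus_mult_cnj_ge[of w z] w by (simp add: a_def \<delta>_def)
  have a_le: "norm a \<le> 2"
    using norm_triangle_ineq4[of 1 "z * cnj w"] z w
    by (simp add: a_def norm_mult) (smt (verit) mult_left_le norm_ge_zero)
  have kc: "norm (k * c) \<le> norm k" using c by (simp add: norm_mult mult_left_le)
  have b_ge: "\<delta> / 2 \<le> norm (a - k * c)"
    using norm_triangle_ineq2[of a "k * c"] a_ge kc k(2) by (simp add: \<delta>_def)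
  have "norm (3 * a - 2 * k * c) \<le> 3 * norm a + 2 * norm (k * c)"
    using norm_triangle_ineq4[of "3 * a" "2 * (k * c)"] by (simp add: norm_mult mult.assoc)
  also have "\<dots> \<le> 8" using a_le kc k(2) norm_ge_zero[of z] by argo
  finally have num: "norm (3 * a - 2 * k * c) \<le> 8" .
  have b: "1 - (z + k) * cnj w = a - k * c" by (simp add: a_def c_def algebra_simps)
  have "(1 / (1 - (z + k) * cnj w)^2 - 1 / (1 - z * cnj w)^2) / k - 2 * cnj w / (1 - z * cnj w)^3
      = k * c^2 * (3 * a - 2 * k * c) / (a^3 * (a - k * c)^2)"
    unfolding b unfolding a_def[symmetric] unfolding c_def[symmetric] using a_ge b_ge \<delta> k(1)
    by (intro bergman_kernel_taylor_remainder) auto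
  also have "norm \<dots> \<le> (norm k * 1 * 8) / (\<delta>^3 * (\<delta> / 2)^2)"
    unfolding norm_divide norm_mult norm_power using \<delta> a_ge b_ge c num
    by (intro frac_le mult_mono power_mono power_le_one) auto
  also have "\<dots> = 32 * norm k / \<delta>^5" using \<delta> by (simp add: field_simps)
  finally show ?thesis by (simp add: \<delta>_def)
qed

lemma measurable_cnj [measurable]: "cnj \<in> borel_measurable borel"
  by (intro borel_measurable_continuous_onI continuous_intros)

lemma set_integrable_bergman_kernel:
  fixes \<mu> :: "complex \<Rightarrow> complex"
  assumes \<mu>: "set_borel_measurable lebesgue (ball 0 1) \<mu>"
    and \<mu>_le: "AE w in lebesgue. w \<in> ball 0 1 \<longrightarrow> norm (\<mu> w) \<le> 1"
    and z: "norm z < 1"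
  shows "set_integrable lebesgue (ball 0 1) (\<lambda>w. \<mu> w * (a * cnj w ^ m / (1 - z * cnj w)^n))"
proof (rule set_integrable_mult_bounded[OF \<mu> \<mu>_le])
  fix w :: complex assume w: "w \<in> ball 0 1"
  have "norm (a * cnj w ^ m / (1 - z * cnj w)^n) \<le> norm a * 1 / (1 - norm z)^n"
    unfolding norm_divide norm_mult norm_power complex_mod_cnj using w z norm_one_minus_mult_cnj_ge[of w z]
    by (intro frac_le mult_left_mono power_le_one power_mono) auto
  then show "norm (a * cnj w ^ m / (1 - z * cnj w)^n) \<le> norm a / (1 - norm z)^n" by simp
qed (use emeasure_lebesgue_unit_disc_finite in auto)

lemma bergman_integral_has_field_derivative:
  fixes \<mu> :: "complex \<Rightarrow> complex"
  assumes \<mu>: "set_borel_measurable lebesgue (ball 0 1) \<mu>"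
    and \<mu>_le: "AE w in lebesgue. w \<in> ball 0 1 \<longrightarrow> norm (\<mu> w) \<le> 1"
    and z: "norm z < 1"
  shows "((\<lambda>z. LINT w:ball 0 1|lebesgue. \<mu> w / (1 - z * cnj w)^2) has_field_derivative
           (LINT w:ball 0 1|lebesgue. \<mu> w * (2 * cnj w / (1 - z * cnj w)^3))) (at z)"
proof -
  define \<delta> where "\<delta> = 1 - norm z"
  have \<delta>: "0 < \<delta>" using z by (simp add: \<delta>_def)
  define G where "G \<zeta> = (LINT w:ball 0 1|lebesgue. \<mu> w * (1 / (1 - \<zeta> * cnj w)^2))" for \<zeta>
  define G' where "G' = (LINT w:ball 0 1|lebesgue. \<mu> w * (2 * cnj w / (1 - z * cnj w)^3))"
  have quotient_le: "norm ((G (z + k) - G z) / k - G') \<le> 32 * norm k / \<delta>^5 * pi"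
    if k: "k \<noteq> 0" "norm k < \<delta> / 2" for k
  proof -
    have zk: "norm (z + k) < 1"
      using norm_triangle_ineq[of z k] k \<delta> by (simp add: \<delta>_def)
    define K1 K0 K' where "K1 w = 1 / (1 - (z + k) * cnj w)^2" and "K0 w = 1 / (1 - z * cnj w)^2"
      and "K' w = 2 * cnj w / (1 - z * cnj w)^3" for w
    have i1: "set_integrable lebesgue (ball 0 1) (\<lambda>w. \<mu> w * K1 w)"
      using set_integrable_bergman_kernel[OF \<mu> \<mu>_le zk, of 1 0 2] by (simp add: K1_def)
    have i0: "set_integrable lebesgue (ball 0 1) (\<lambda>w. \<mu> w * K0 w)"
      using set_integrable_bergman_kernel[OF \<mu> \<mu>_le z, of 1 0 2] by (simp add: K0_def)
    have i': "set_integrable lebesgue (ball 0 1) (\<lambda>w. \<mu> w * K' w)"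
      using set_integrable_bergman_kernel[OF \<mu> \<mu>_le z, of 2 1 3] by (simp add: K'_def)
    have "(G (z + k) - G z) / k - G'
        = (LINT w:ball 0 1|lebesgue. (\<mu> w * K1 w - \<mu> w * K0 w) / k - \<mu> w * K' w)"
      unfolding G_def G'_def K1_def[symmetric] K0_def[symmetric] K'_def[symmetric]
      by (simp only: set_integral_diff(2)[OF set_integrable_divide[OF set_integral_diff(1)[OF i1 i0]] i']
          set_integral_diff(2)[OF i1 i0] set_integral_divide_zero)
    also have "\<dots> = (LINT w:ball 0 1|lebesgue. \<mu> w * ((K1 w - K0 w) / k - K' w))"
      by (simp add: right_diff_distrib)
    also have "norm \<dots> \<le> 32 * norm k / \<delta>^5 * pi"
      using bergman_kernel_remainder_bound[OF z _ k(1)] k(2)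
      by (intro norm_set_integral_unit_disc_mult_le[OF \<mu> \<mu>_le]) (auto simp: \<delta>_def K1_def K0_def K'_def)
    finally show ?thesis .
  qed
  have "((\<lambda>k. (G (z + k) - G z) / k - G') \<longlongrightarrow> 0) (at 0)"
  proof (rule Lim_null_comparison)
    show "\<forall>\<^sub>F k in at 0. norm ((G (z + k) - G z) / k - G') \<le> 32 * norm k / \<delta>^5 * pi"
      unfolding eventually_at using \<delta> quotient_le by (intro exI[of _ "\<delta> / 2"]) (auto simp: dist_norm)
    show "((\<lambda>k. 32 * norm k / \<delta>^5 * pi) \<longlongrightarrow> 0) (at (0::complex))"
      using \<delta> by (auto intro!: tendsto_eq_intros)
  qed
  then have "(G has_field_derivative G') (at z)"
    unfolding DERIV_def by (rule LIM_zero_cancel)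
  then show ?thesis by (simp add: G_def[abs_def] G'_def)
qed

lemma bergman_proj_holomorphic:
  fixes \<mu> :: "complex \<Rightarrow> complex"
  assumes \<mu>: "set_borel_measurable lebesgue (ball 0 1) \<mu>"
    and \<mu>_le: "AE w in lebesgue. w \<in> ball 0 1 \<longrightarrow> norm (\<mu> w) \<le> 1"
  shows "bergman_proj \<mu> holomorphic_on ball 0 1"
proof -
  have "(\<lambda>z. LINT w:ball 0 1|lebesgue. \<mu> w / (1 - z * cnj w)^2) field_differentiable at z"
    if "z \<in> ball 0 1" for z
    using bergman_integral_has_field_derivative[OF \<mu> \<mu>_le] that
    by (auto simp: field_differentiable_def)
  then show ?thesis
    unfolding bergman_proj_def[abs_def]
    by (intro holomorphic_intros) (auto simp: holomorphic_on_def field_differentiable_at_within)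
qed

lemma norm_bergman_proj_0_le:
  fixes \<mu> :: "complex \<Rightarrow> complex"
  assumes \<mu>: "set_borel_measurable lebesgue (ball 0 1) \<mu>"
    and \<mu>_le: "AE w in lebesgue. w \<in> ball 0 1 \<longrightarrow> norm (\<mu> w) \<le> 1"
  shows "norm (bergman_proj \<mu> 0) \<le> 1"
proof -
  have "norm (LINT w:ball 0 1|lebesgue. \<mu> w * 1) \<le> 1 * pi"
    by (rule norm_set_integral_unit_disc_mult_le[OF \<mu> \<mu>_le]) auto
  then show ?thesis by (simp add: bergman_proj_def norm_divide)
qed

section \<open>Calculus in polar coordinates\<close>

lemma has_vector_derivative_polar:
  assumes f: "(f has_field_derivative f') (at (of_real x * cis t))"
  shows has_vector_derivative_polar_radius:
      "((\<lambda>x. f (of_real x * cis t)) has_vector_derivative cis t * f') (at x within A)"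
    and has_vector_derivative_polar_angle:
      "((\<lambda>t. f (of_real x * cis t)) has_vector_derivative \<i> * of_real x * cis t * f') (at t within A)"
proof -
  have "((\<lambda>x. of_real x * cis t) has_vector_derivative cis t) (at x within A)"
    by (auto intro!: derivative_eq_intros)
  from field_vector_diff_chain_within[OF this has_field_derivative_at_within[OF f]]
  show "((\<lambda>x. f (of_real x * cis t)) has_vector_derivative cis t * f') (at x within A)"
    by (simp add: o_def)
  have "((\<lambda>t. of_real x * cis t) has_vector_derivative \<i> * of_real x * cis t) (at t within A)"
    unfolding has_vector_derivative_def by (auto intro!: derivative_eq_intros simp: algebra_simps)
  from field_vector_diff_chain_within[OF this has_field_derivative_at_within[OF f]]
  show "((\<lambda>t. f (of_real x * cis t)) has_vector_derivative \<i> * of_real x * cis t * f') (at t within A)"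
    by (simp add: o_def)
qed

lemma continuous_on_polar:
  assumes "continuous_on (ball 0 1) f"
  shows "continuous_on ({-1<..<1} \<times> A) (\<lambda>p. f (of_real (fst p) * cis (snd p)))"
  by (rule continuous_on_compose2[OF assms]) (auto simp: norm_mult intro!: continuous_intros)

lemma continuous_on_circle:
  assumes "continuous_on (ball 0 1) f" "-1 < x" "x < 1"
  shows "continuous_on A (\<lambda>t. f (of_real x * cis t))"
  by (rule continuous_on_compose2[OF assms(1)]) (use assms in \<open>auto simp: norm_mult intro!: continuous_intros\<close>)

lemma has_real_derivative_integral_parametric:
  fixes f f' :: "real \<Rightarrow> real \<Rightarrow> real"
  assumes f: "\<And>x t. x \<in> U \<Longrightarrow> ((\<lambda>x. f x t) has_real_derivative f' x t) (at x)"
    and cont: "continuous_on (U \<times> {a..b}) (\<lambda>p. f (fst p) (snd p))"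
      "continuous_on (U \<times> {a..b}) (\<lambda>p. f' (fst p) (snd p))"
    and U: "open U" "convex U" "x \<in> U"
  shows "((\<lambda>x. integral {a..b} (f x)) has_real_derivative integral {a..b} (f' x)) (at x)"
proof -
  have "continuous_on {a..b} (\<lambda>t. (\<lambda>p. f (fst p) (snd p)) (y, t))" if "y \<in> U" for y
    by (rule continuous_on_compose2[OF cont(1)]) (use that in \<open>auto intro!: continuous_intros\<close>)
  then have int: "f y integrable_on cbox a b" if "y \<in> U" for y
    using that by (simp add: integrable_continuous_real)
  have "((\<lambda>x. integral (cbox a b) (f x)) has_real_derivative integral (cbox a b) (f' x)) (at x within U)"
    by (rule leibniz_rule_field_derivative[OF has_field_derivative_at_within[OF f] int])
      (use cont(2) U in \<open>auto simp: case_prod_unfold\<close>)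
  then show ?thesis by (simp add: at_within_open[OF U(3,1)])
qed

lemma has_integral_derivative_periodic:
  fixes B :: "real \<Rightarrow> real"
  assumes B: "\<And>t. (B has_real_derivative B' t) (at t)" and "B a = B b" "a \<le> b"
  shows "(B' has_integral 0) {a..b}"
proof -
  have "(B' has_integral B b - B a) {a..b}"
    using B by (intro fundamental_theorem_of_calculus[OF \<open>a \<le> b\<close>])
      (simp add: has_real_derivative_iff_has_vector_derivative[symmetric] has_field_derivative_at_within)
  then show ?thesis using \<open>B a = B b\<close> by simp
qed

section \<open>A comparison principle for radial means\<close>

lemma one_minus_square_pos: "-1 < x \<Longrightarrow> x < 1 \<Longrightarrow> 0 < 1 - (x::real)^2"
  by (simp add: abs_square_less_1)

lemma has_real_derivative_one_minus_square_powr: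
  assumes x: "-1 < x" "x < 1"
  shows "((\<lambda>x. (1 - x^2) powr (-a)) has_real_derivative
           2 * a * x * (1 - x^2) powr (-a) / (1 - x^2)) (at x)"
  using one_minus_square_pos[OF x]
  by (auto intro!: derivative_eq_intros simp: field_simps powr_diff)

lemma has_real_derivative_one_minus_square_powr_flux:
  assumes x: "-1 < x" "x < 1"
  shows "((\<lambda>x. 2 * a * x^2 * (1 - x^2) powr (-a) / (1 - x^2)) has_real_derivative
           4 * a * x * (1 + a * x^2) * (1 - x^2) powr (-a) / (1 - x^2)^2) (at x)"
proof -
  define P where "P x = (1 - x^2) powr (-a)" for x :: real
  have pos: "0 < 1 - x^2" using one_minus_square_pos[OF x] .
  have P: "(P has_real_derivative 2 * a * x * P x / (1 - x^2)) (at x)"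
    unfolding P_def[abs_def] by (rule has_real_derivative_one_minus_square_powr[OF x])
  have "((\<lambda>x. 2 * a * x^2 * P x / (1 - x^2)) has_real_derivative
      ((2 * a * (2 * x) * P x + 2 * a * x^2 * (2 * a * x * P x / (1 - x^2))) * (1 - x^2)
        - 2 * a * x^2 * P x * (- (2 * x))) / (1 - x^2)^2) (at x)"
    using pos by (auto intro!: derivative_eq_intros P simp: power2_eq_square)
  also have "((2 * a * (2 * x) * P x + 2 * a * x^2 * (2 * a * x * P x / (1 - x^2))) * (1 - x^2)
        - 2 * a * x^2 * P x * (- (2 * x))) / (1 - x^2)^2
      = 4 * a * x * (1 + a * x^2) * P x / (1 - x^2)^2"
    using pos by (simp add: field_simps)
  finally show ?thesis by (simp add: P_def)
qed

lemma radial_log_derivative_le: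
  fixes M M' N N' :: "real \<Rightarrow> real" and c :: real
  assumes M: "\<And>x. -1 < x \<Longrightarrow> x < 1 \<Longrightarrow> (M has_real_derivative M' x) (at x)"
    and N: "\<And>x. -1 < x \<Longrightarrow> x < 1 \<Longrightarrow> (N has_real_derivative N' x) (at x)"
    and N_eq: "\<And>x. -1 < x \<Longrightarrow> x < 1 \<Longrightarrow> N x = x * M' x"
    and M_nonneg: "\<And>x. -1 < x \<Longrightarrow> x < 1 \<Longrightarrow> 0 \<le> M x"
    and N'_le: "\<And>x. 0 < x \<Longrightarrow> x < 1 \<Longrightarrow> N' x \<le> c * x / (1 - x^2)^2 * M x"
    and c: "0 \<le> c" and x: "0 < x" "x < 1"
  shows "M' x * (1 - x^2) \<le> c / 2 * x * M x"
proof -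
  define a where "a = c / 4"
  define \<Phi> where "\<Phi> x = (1 - x^2) powr (-a)" for x :: real
  define \<Psi> where "\<Psi> x = 2 * a * x^2 * \<Phi> x / (1 - x^2)" for x :: real
  define \<Psi>' where "\<Psi>' x = 4 * a * x * (1 + a * x^2) * \<Phi> x / (1 - x^2)^2" for x :: real
  have \<Phi>_pos: "0 < \<Phi> x" if "-1 < x" "x < 1" for x
    using one_minus_square_pos[OF that] by (simp add: \<Phi>_def)
  have \<Phi>: "(\<Phi> has_real_derivative 2 * a * x * \<Phi> x / (1 - x^2)) (at x)" if "-1 < x" "x < 1" for x
    unfolding \<Phi>_def[abs_def] by (rule has_real_derivative_one_minus_square_powr[OF that])
  have \<Psi>: "(\<Psi> has_real_derivative \<Psi>' x) (at x)" if "-1 < x" "x < 1" for x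
    unfolding \<Psi>_def[abs_def] \<Psi>'_def \<Phi>_def by (rule has_real_derivative_one_minus_square_powr_flux[OF that])
  text \<open>\<Phi> is a supersolution of the differential inequality satisfied by M, and \<Psi> = x \<Phi>';
    the Wronskian W starts at 0 and increases.\<close>
  define W where "W x = \<Psi> x * M x - \<Phi> x * N x" for x
  have W: "(W has_real_derivative \<Psi>' x * M x - \<Phi> x * N' x) (at x)" if x: "-1 < x" "x < 1" for x
  proof -
    have "\<Psi> x * M' x = 2 * a * x * \<Phi> x / (1 - x^2) * N x"
      by (simp add: \<Psi>_def N_eq[OF x] power2_eq_square)
    then show ?thesis
      unfolding W_def[abs_def] by (auto intro!: derivative_eq_intros \<Phi> \<Psi> M N x simp: mult.commute)
  qed
  have "W 0 \<le> W x"
  proof (rule DERIV_nonneg_imp_increasing_open[OF less_imp_le[OF x(1)]])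
    fix y assume y: "0 < y" "y < x"
    then have y1: "-1 < y" "y < 1" using x by auto
    have "\<Phi> y * N' y \<le> \<Phi> y * (c * y / (1 - y^2)^2 * M y)"
      using N'_le[of y] y y1 \<Phi>_pos[OF y1] by (intro mult_left_mono) auto
    also have "\<dots> = c * y * \<Phi> y / (1 - y^2)^2 * M y * 1" by simp
    also have "\<dots> \<le> c * y * \<Phi> y / (1 - y^2)^2 * M y * (1 + a * y^2)"
      using c y M_nonneg[OF y1] \<Phi>_pos[OF y1] by (intro mult_left_mono) (auto simp: a_def)
    also have "\<dots> = \<Psi>' y * M y" by (simp add: \<Psi>'_def a_def)
    finally show "\<exists>d. (W has_real_derivative d) (at y) \<and> 0 \<le> d"
      using W[OF y1] by (intro exI conjI) auto
  next
    show "continuous_on {0..x} W"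
      using x by (intro continuous_at_imp_continuous_on ballI DERIV_isCont[OF W]) auto
  qed
  then have "x * (\<Phi> x * (M' x * (1 - x^2))) \<le> x * (\<Phi> x * (c / 2 * x * M x))"
    using one_minus_square_pos[of x] x
    by (simp add: W_def \<Psi>_def N_eq a_def field_simps power2_eq_square)
  then have "\<Phi> x * (M' x * (1 - x^2)) \<le> \<Phi> x * (c / 2 * x * M x)"
    using x by (simp only: mult_le_cancel_left_pos)
  then show ?thesis
    using x \<Phi>_pos[of x] by (simp only: mult_le_cancel_left_pos)
qed

lemma radial_growth_le:
  fixes M M' :: "real \<Rightarrow> real"
  assumes M: "\<And>x. -1 < x \<Longrightarrow> x < 1 \<Longrightarrow> (M has_real_derivative M' x) (at x)"
    and M'_le: "\<And>x. 0 < x \<Longrightarrow> x < 1 \<Longrightarrow> M' x * (1 - x^2) \<le> 2 * a * x * M x"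
    and r: "0 \<le> r" "r < 1"
  shows "M r \<le> M 0 * (1 - r^2) powr (-a)"
proof -
  define \<Phi> where "\<Phi> x = (1 - x^2) powr (-a)" for x :: real
  have \<Phi>_pos: "0 < \<Phi> x" if "-1 < x" "x < 1" for x
    using one_minus_square_pos[OF that] by (simp add: \<Phi>_def)
  have \<Phi>: "(\<Phi> has_real_derivative 2 * a * x * \<Phi> x / (1 - x^2)) (at x)" if "-1 < x" "x < 1" for x
    unfolding \<Phi>_def[abs_def] by (rule has_real_derivative_one_minus_square_powr[OF that])
  define Q where "Q x = M x / \<Phi> x" for x
  have Q: "(Q has_real_derivative (M' x * (1 - x^2) - 2 * a * x * M x) / ((1 - x^2) * \<Phi> x)) (at x)"
    if x: "-1 < x" "x < 1" for x
  proof -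
    have "(Q has_real_derivative (M' x * \<Phi> x - M x * (2 * a * x * \<Phi> x / (1 - x^2))) / (\<Phi> x)^2) (at x)"
      unfolding Q_def[abs_def] using \<Phi>_pos[OF x]
      by (auto intro!: derivative_eq_intros M \<Phi> x simp: power2_eq_square)
    moreover have "(M' x * \<Phi> x - M x * (2 * a * x * \<Phi> x / (1 - x^2))) / (\<Phi> x)^2
        = (M' x * (1 - x^2) - 2 * a * x * M x) / ((1 - x^2) * \<Phi> x)"
      using \<Phi>_pos[OF x] one_minus_square_pos[OF x] by (simp add: field_simps power2_eq_square)
    ultimately show ?thesis by simp
  qed
  have "Q r \<le> Q 0"
  proof (rule DERIV_nonpos_imp_decreasing_open[OF r(1)])
    fix y assume y: "0 < y" "y < r"
    then have y1: "-1 < y" "y < 1" using r by auto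
    have "(M' y * (1 - y^2) - 2 * a * y * M y) / ((1 - y^2) * \<Phi> y) \<le> 0"
      using M'_le[of y] y y1 \<Phi>_pos[OF y1] one_minus_square_pos[OF y1]
      by (intro divide_nonpos_nonneg) auto
    then show "\<exists>d. (Q has_real_derivative d) (at y) \<and> d \<le> 0"
      using Q[OF y1] by blast
  next
    show "continuous_on {0..r} Q"
      using r by (intro continuous_at_imp_continuous_on ballI DERIV_isCont[OF Q]) auto
  qed
  then show ?thesis
    using \<Phi>_pos[of r] r by (simp add: Q_def \<Phi>_def divide_le_eq)
qed

section \<open>Circle means of exp (Re h)\<close>

lemma holomorphic_on_polar_has_field_derivative:
  assumes "f holomorphic_on ball 0 1" "-1 < x" "x < 1"
  shows "(f has_field_derivative deriv f (of_real x * cis t)) (at (of_real x * cis t))"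
  using assms by (intro holomorphic_derivI[OF assms(1)]) (auto simp: norm_mult)

locale unit_disc_holomorphic =
  fixes h :: "complex \<Rightarrow> complex"
  assumes holomorphic: "h holomorphic_on ball 0 1"
begin

definition rad_deriv :: "complex \<Rightarrow> complex" where
  "rad_deriv z = z * deriv h z"

definition E :: "real \<Rightarrow> real \<Rightarrow> real" where
  "E x t = exp (Re (h (of_real x * cis t)))"

definition mean :: "real \<Rightarrow> real" where
  "mean x = integral {0..2*pi} (E x)"

definition mean' :: "real \<Rightarrow> real" where
  "mean' x = integral {0..2*pi} (\<lambda>t. Re (cis t * deriv h (of_real x * cis t)) * E x t)"

definition flux :: "real \<Rightarrow> real" where
  "flux x = integral {0..2*pi} (\<lambda>t. Re (rad_deriv (of_real x * cis t)) * E x t)"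

definition flux' :: "real \<Rightarrow> real" where
  "flux' x = integral {0..2*pi} (\<lambda>t. (Re (cis t * deriv rad_deriv (of_real x * cis t))
      + Re (rad_deriv (of_real x * cis t)) * Re (cis t * deriv h (of_real x * cis t))) * E x t)"

lemma holomorphic_deriv_h: "deriv h holomorphic_on ball 0 1"
  using holomorphic by (rule holomorphic_deriv) simp

lemma holomorphic_rad_deriv: "rad_deriv holomorphic_on ball 0 1"
  unfolding rad_deriv_def[abs_def] by (intro holomorphic_intros holomorphic_deriv_h)

lemmas continuous_on_polar_intros =
  continuous_on_polar[OF holomorphic_on_imp_continuous_on[OF holomorphic]]
  continuous_on_polar[OF holomorphic_on_imp_continuous_on[OF holomorphic_deriv_h]]
  continuous_on_polar[OF holomorphic_on_imp_continuous_on[OF holomorphic_rad_deriv]]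
  continuous_on_polar[OF holomorphic_on_imp_continuous_on[OF holomorphic_deriv[OF holomorphic_rad_deriv open_ball]]]

lemma E_has_real_derivative_radius:
  assumes "-1 < x" "x < 1"
  shows "((\<lambda>x. E x t) has_real_derivative Re (cis t * deriv h (of_real x * cis t)) * E x t) (at x)"
proof -
  note h = holomorphic_on_polar_has_field_derivative[OF holomorphic assms]
  from DERIV_chain2[OF DERIV_exp has_field_derivative_Re[OF has_vector_derivative_polar_radius[OF h]]]
  show ?thesis by (simp add: E_def mult.commute)
qed

lemma E_has_real_derivative_angle:
  assumes "-1 < x" "x < 1"
  shows "((\<lambda>t. E x t) has_real_derivative - Im (rad_deriv (of_real x * cis t)) * E x t) (at t)"
proof -
  note h = holomorphic_on_polar_has_field_derivative[OF holomorphic assms]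
  have "((\<lambda>t. Re (h (of_real x * cis t))) has_real_derivative
      Re (\<i> * of_real x * cis t * deriv h (of_real x * cis t))) (at t)"
    by (rule has_field_derivative_Re[OF has_vector_derivative_polar_angle[OF h]])
  from DERIV_chain2[OF DERIV_exp this] show ?thesis
    by (simp add: E_def rad_deriv_def algebra_simps)
qed

lemma mean_has_real_derivative:
  assumes "-1 < x" "x < 1"
  shows "(mean has_real_derivative mean' x) (at x)"
  unfolding mean_def[abs_def] mean'_def using assms
  by (intro has_real_derivative_integral_parametric[where U="{-1<..<1}"] E_has_real_derivative_radius)
    (auto simp: E_def intro!: continuous_intros continuous_on_polar_intros)

lemma flux_has_real_derivative:
  assumes "-1 < x" "x < 1"
  shows "(flux has_real_derivative flux' x) (at x)"
proof -
  have "((\<lambda>x. Re (rad_deriv (of_real x * cis t)) * E x t) has_real_derivative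
      (Re (cis t * deriv rad_deriv (of_real x * cis t))
        + Re (rad_deriv (of_real x * cis t)) * Re (cis t * deriv h (of_real x * cis t))) * E x t) (at x)"
    if "-1 < x" "x < 1" for x t
    using DERIV_mult[OF has_field_derivative_Re[OF has_vector_derivative_polar_radius[OF
        holomorphic_on_polar_has_field_derivative[OF holomorphic_rad_deriv that]]]
      E_has_real_derivative_radius[OF that]]
    by (simp add: algebra_simps)
  then show ?thesis
    unfolding flux_def[abs_def] flux'_def using assms
    by (intro has_real_derivative_integral_parametric[where U="{-1<..<1}"])
      (auto simp: E_def intro!: continuous_intros continuous_on_polar_intros)
qed

lemma flux_eq: "flux x = x * mean' x"
  unfolding flux_def mean'_def integral_mult_right[symmetric]
  by (rule integral_cong) (simp add: rad_deriv_def mult.assoc)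

lemma continuous_on_E:
  assumes "-1 < x" "x < 1"
  shows "continuous_on A (E x)"
  unfolding E_def[abs_def]
  by (intro continuous_intros continuous_on_circle[OF holomorphic_on_imp_continuous_on[OF holomorphic] assms])

lemma mean_nonneg:
  assumes "-1 < x" "x < 1"
  shows "0 \<le> mean x"
  unfolding mean_def
  by (rule integral_nonneg) (auto simp: E_def intro: integrable_continuous_real continuous_on_E[OF assms])

text \<open>Green's identity on the circle of radius x: the angular part of the polar Laplacian of
  e^{Re h} is the t-derivative of Im (z h'(z)) e^{Re h}, which integrates to zero over a period,
  while \<Delta> e^{Re h} = |h'|^2 e^{Re h}.\<close>
lemma flux'_eq:
  assumes x: "-1 < x" "x < 1"
  shows "x * flux' x = integral {0..2*pi} (\<lambda>t. (norm (rad_deriv (of_real x * cis t)))^2 * E x t)"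
proof -
  define k k' hr where "k t = rad_deriv (of_real x * cis t)"
    and "k' t = deriv rad_deriv (of_real x * cis t)"
    and "hr t = Re (cis t * deriv h (of_real x * cis t))" for t
  define B where "B = (\<lambda>t. Im (k t) * E x t)"
  define B' where "B' t = (x * Re (cis t * k' t) - (Im (k t))^2) * E x t" for t
  have "(B has_real_derivative B' t) (at t)" for t
    using DERIV_mult[OF has_field_derivative_Im[OF has_vector_derivative_polar_angle[OF
        holomorphic_on_polar_has_field_derivative[OF holomorphic_rad_deriv x]]]
      E_has_real_derivative_angle[OF x]]
    by (simp add: B_def B'_def k_def k'_def algebra_simps power2_eq_square)
  then have B': "(B' has_integral 0) {0..2*pi}"
    by (rule has_integral_derivative_periodic) (simp_all add: B_def k_def E_def)
  have k: "x * hr t = Re (k t)" for t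
    by (simp add: hr_def k_def rad_deriv_def algebra_simps)
  have "x * ((Re (cis t * k' t) + Re (k t) * hr t) * E x t)
      = (x * Re (cis t * k' t) + Re (k t) * (x * hr t)) * E x t" for t
    by (simp add: algebra_simps)
  also have "\<dots> t = B' t + (norm (k t))^2 * E x t" for t
    by (simp only: k B'_def cmod_power2) (simp add: algebra_simps power2_eq_square)
  finally have "x * flux' x = integral {0..2*pi} (\<lambda>t. B' t + (norm (k t))^2 * E x t)"
    unfolding flux'_def integral_mult_right[symmetric] k_def[symmetric] k'_def[symmetric] hr_def[symmetric]
    by simp
  also have "\<dots> = integral {0..2*pi} (\<lambda>t. (norm (k t))^2 * E x t)"
  proof (subst integral_add)
    show "(\<lambda>t. (norm (k t))^2 * E x t) integrable_on {0..2*pi}"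
      unfolding k_def
      by (intro integrable_continuous_real continuous_intros continuous_on_E[OF x]
          continuous_on_circle[OF holomorphic_on_imp_continuous_on[OF holomorphic_rad_deriv] x])
  qed (use B' in \<open>auto simp: integral_unique\<close>)
  finally show ?thesis by (simp add: k_def)
qed

lemma flux'_le:
  assumes bound: "\<And>z. norm z < 1 \<Longrightarrow> (norm (deriv h z))^2 \<le> c / (1 - (norm z)^2)^2"
    and x: "0 < x" "x < 1"
  shows "flux' x \<le> c * x / (1 - x^2)^2 * mean x"
proof -
  have x': "-1 < x" "x < 1" using x by auto
  have "(norm (rad_deriv (of_real x * cis t)))^2 \<le> x^2 * (c / (1 - x^2)^2)" for t
  proof -
    have "(norm (deriv h (of_real x * cis t)))^2 \<le> c / (1 - x^2)^2"
      using bound[of "of_real x * cis t"] x by (simp add: norm_mult)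
    then have "x^2 * (norm (deriv h (of_real x * cis t)))^2 \<le> x^2 * (c / (1 - x^2)^2)"
      by (rule mult_left_mono) simp
    then show ?thesis using x by (simp add: rad_deriv_def norm_mult power_mult_distrib)
  qed
  then have "x * flux' x \<le> integral {0..2*pi} (\<lambda>t. x^2 * (c / (1 - x^2)^2) * E x t)"
    unfolding flux'_eq[OF x']
    by (intro integral_le mult_right_mono integrable_continuous_real continuous_intros
        continuous_on_E[OF x'] continuous_on_circle[OF holomorphic_on_imp_continuous_on[OF holomorphic_rad_deriv] x'])
      (auto simp: E_def)
  also have "\<dots> = x * (c * x / (1 - x^2)^2 * mean x)"
    by (simp add: mean_def power2_eq_square)
  finally show ?thesis using x by (simp only: mult_le_cancel_left_pos)
qed

lemma mean_le:
  assumes bound: "\<And>z. norm z < 1 \<Longrightarrow> (norm (deriv h z))^2 \<le> c / (1 - (norm z)^2)^2"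
    and "0 \<le> c" "0 \<le> r" "r < 1"
  shows "mean r \<le> 2 * pi * exp (Re (h 0)) * (1 - r^2) powr (- (c / 4))"
proof -
  have "mean' x * (1 - x^2) \<le> 2 * (c / 4) * x * mean x" if "0 < x" "x < 1" for x
    using radial_log_derivative_le[OF mean_has_real_derivative flux_has_real_derivative flux_eq
        mean_nonneg flux'_le[OF bound]] assms that by simp
  then have "mean r \<le> mean 0 * (1 - r^2) powr (- (c / 4))"
    by (intro radial_growth_le[OF mean_has_real_derivative]) (use assms in auto)
  moreover have "mean 0 = 2 * pi * exp (Re (h 0))"
    by (simp add: mean_def E_def[abs_def])
  ultimately show ?thesis by simp
qed

end

lemma circle_avg_eq_integral:
  assumes "continuous_on {0..2*pi} (\<lambda>\<theta>. f (cis \<theta>))"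
  shows "circle_avg f = integral {0..2*pi} (\<lambda>\<theta>. f (cis \<theta>)) / (2 * pi)"
proof -
  have "set_integrable lborel {0..2*pi} (\<lambda>\<theta>. f (cis \<theta>))"
    using borel_integrable_compact[OF compact_Icc assms] by (simp add: set_integrable_def)
  then show ?thesis
    by (simp add: circle_avg_def set_borel_integral_eq_integral(2))
qed

lemma norm_deriv_cmult_le:
  fixes g :: "complex \<Rightarrow> complex"
  assumes g: "g holomorphic_on ball 0 1"
    and bound: "\<forall>z \<in> ball 0 1. (1 - (norm z)^2)^2 * (norm (deriv g z))^2 \<le> \<eta>"
    and z: "norm z < 1"
  shows "(norm (deriv (\<lambda>z. a * g z) z))^2 \<le> \<eta> * (norm a)^2 / (1 - (norm z)^2)^2"
proof -
  have "deriv (\<lambda>z. a * g z) z = a * deriv g z"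
    using g z by (intro deriv_cmult holomorphic_on_imp_differentiable_at) auto
  moreover have "0 < 1 - (norm z)^2"
    using z by (simp add: abs_square_less_1)
  moreover have "(norm a)^2 * ((1 - (norm z)^2)^2 * (norm (deriv g z))^2) \<le> (norm a)^2 * \<eta>"
    using bound z by (intro mult_left_mono) auto
  ultimately show ?thesis
    by (simp add: norm_mult power_mult_distrib field_simps)
qed

theorem mainTheorem4:
  fixes \<mu> :: "complex \<Rightarrow> complex" and \<eta> :: real and t :: complex and r :: real
  assumes meas: "set_borel_measurable lebesgue (ball 0 1) \<mu>"
    and bdd: "AE w in lebesgue. w \<in> ball 0 1 \<longrightarrow> norm (\<mu> w) \<le> 1"
    and eta_pos: "\<eta> > 0"
    and Ng: "\<forall>z \<in> ball 0 1. (1 - (norm z)\<^sup>2)\<^sup>2 * (norm (deriv (bergman_proj \<mu>) z))\<^sup>2 \<le> \<eta>"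
    and t_le: "norm t \<le> pi / 16"
    and r: "0 < r" "r < 1"
  shows "circle_avg (\<lambda>\<zeta>. norm (exp (t * bergman_proj \<mu> (of_real r * \<zeta>))))
           \<le> 4 * (1 - r\<^sup>2) powr (- (\<eta> * (norm t)\<^sup>2 / 4))"
proof -
  note g = bergman_proj_holomorphic[OF meas bdd]
  interpret unit_disc_holomorphic "\<lambda>z. t * bergman_proj \<mu> z"
    by unfold_locales (intro holomorphic_intros g)
  have "circle_avg (\<lambda>\<zeta>. norm (exp (t * bergman_proj \<mu> (of_real r * \<zeta>)))) = mean r / (2 * pi)"
    using r continuous_on_E[of r]
    by (subst circle_avg_eq_integral) (auto simp: mean_def E_def[abs_def] norm_exp_eq_Re)
  also have "\<dots> \<le> exp (Re (t * bergman_proj \<mu> 0)) * (1 - r^2) powr (- (\<eta> * (norm t)^2 / 4))"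
    using mean_le[OF norm_deriv_cmult_le[OF g Ng]] eta_pos r by (simp add: field_simps)
  also have "exp (Re (t * bergman_proj \<mu> 0)) \<le> exp 1"
    using complex_Re_le_cmod[of "t * bergman_proj \<mu> 0"] t_le pi_less_4
      mult_mono[OF t_le norm_bergman_proj_0_le[OF meas bdd]]
    by (simp add: norm_mult)
  also have "exp (1::real) \<le> 4"
    using exp_le by simp
  finally show ?thesis by (simp add: mult_right_mono)
qed

end
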